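(* Let $X$, $\mathcal{B}$, $\Delta$, $\mathcal{D}(\mathcal{B})$ and $\mu\mapsto\hat\mu$ be as in the context (in particular $\mathcal{B}$ vanishes nowhere on $X$). Let $\mu\in\mathcal{D}(\mathcal{B})$. Then for every $f\in\mathcal{B}$, \[\|f\|_{L_2(X,\mu)}=\|\hat f\|_{L_2(\Delta,\hat\mu)}.\]
   Context: $X$ is a nonempty set and $\mathcal{B}$ is a real vector space of bounded functions $X\to\mathbb{R}$ closed under pointwise multiplication, pointwise max and min, with $f\wedge1\in\mathcal{B}$ for $f\in\mathcal{B}$. Assume that for every $x\in X$ there is $f\in\mathcal{B}$ with $f(x)\neq0$. $A(\mathcal{B})$ is the supremum-norm closure of $\mathcal{B}+i\mathcal{B}$, a commutative $C^\ast$-algebra; $\Delta$ is its spectrum (nonzero continuous multiplicative linear functionals with the Gelfand topology), locally compact Hausdorff; $\hat a(\varphi)=\varphi(a)$ is the Gelfand transform, an isometric $^\ast$-isomorphism $A(\mathcal{B})\to C_0(\Delta)$; $\hat f\geq0$ iff $f$ is real-valued and $\geq0$. $\sigma(\mathcal{B})$ is the $\sigma$-ring generated by $\mathcal{B}$, and $\mathcal{D}(\mathcal{B})$ is the set of nonnegative measures $\mu$ on $\sigma(\mathcal{B})$ such that every $f\in\mathcal{B}$ is $\mu$-integrable. For $\mu\in\mathcal{D}(\mathcal{B})$: set $I(f)=\int_Xf\,d\mu$ for $f\in\mathcal{B}$; for nonnegative real-valued $f\in A(\mathcal{B})$ set $I(f)=\sup_nI(f_n)$ for any increasing sequence $(f_n)$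 of nonnegative functions in $\mathcal{B}$ converging pointwise to $f$; set $\hat I(\hat f):=I(f)$ for nonnegative $\hat f\in C_0(\Delta)$; $\hat\mu$ is the unique nonnegative Radon measure on $\Delta$ with $\int_\Delta\hat g\,d\hat\mu=\hat I(\hat g)$ for all nonnegative $\hat g\in C_c(\Delta)$. *)

theory Defs
  imports "HOL-Analysis.Analysis"
begin

text \<open>Standing assumptions on the function space B of bounded real functions on the set X
  (represented by the type 'a).\<close>
definition admissible_space :: "('a \<Rightarrow> real) set \<Rightarrow> bool" where
  "admissible_space B \<longleftrightarrow>
     (\<lambda>x. 0) \<in> B \<and>
     (\<forall>f\<in>B. \<forall>g\<in>B. (\<lambda>x. f x + g x) \<in> B) \<and>
     (\<forall>f\<in>B. \<forall>c::real. (\<lambda>x. c * f x) \<in> B) \<and>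
     (\<forall>f\<in>B. \<forall>g\<in>B. (\<lambda>x. f x * g x) \<in> B) \<and>
     (\<forall>f\<in>B. \<forall>g\<in>B. (\<lambda>x. max (f x) (g x)) \<in> B) \<and>
     (\<forall>f\<in>B. \<forall>g\<in>B. (\<lambda>x. min (f x) (g x)) \<in> B) \<and>
     (\<forall>f\<in>B. (\<lambda>x. min (f x) 1) \<in> B) \<and>
     (\<forall>f\<in>B. \<exists>C. \<forall>x. \<bar>f x\<bar> \<le> C) \<and>
     (\<forall>x. \<exists>f\<in>B. f x \<noteq> 0)"

text \<open>A(B): supremum-norm closure of B + iB.\<close>
definition algA :: "('a \<Rightarrow> real) set \<Rightarrow> ('a \<Rightarrow> complex) set" where
  "algA B = {a. \<forall>e>0. \<exists>f\<in>B. \<exists>g\<in>B.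
      (\<exists>r<e. \<forall>x. cmod (a x - (complex_of_real (f x) + \<i> * complex_of_real (g x))) \<le> r)}"

text \<open>The spectrum Delta: nonzero continuous multiplicative linear functionals on A(B).
  Functionals are normalised to be 0 outside A(B), so that each character is a unique
  HOL function.\<close>
definition spectrum_chars :: "('a \<Rightarrow> real) set \<Rightarrow> (('a \<Rightarrow> complex) \<Rightarrow> complex) set" where
  "spectrum_chars B = {\<phi>.
     (\<forall>a. a \<notin> algA B \<longrightarrow> \<phi> a = 0) \<and>
     (\<forall>a\<in>algA B. \<forall>b\<in>algA B. \<phi> (\<lambda>x. a x + b x) = \<phi> a + \<phi> b) \<and>
     (\<forall>a\<in>algA B. \<forall>c::complex. \<phi> (\<lambda>x. c * a x) = c * \<phi> a) \<and>
     (\<forall>a\<in>algA B. \<forall>b\<in>algA B. \<phi> (\<lambda>x. a x * b x) = \<phi> a * \<phi> b) \<and>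
     (\<exists>a\<in>algA B. \<phi> a \<noteq> 0) \<and>
     (\<exists>C. \<forall>a\<in>algA B. cmod (\<phi> a) \<le> C * (SUP x. cmod (a x)))}"

text \<open>Gelfand topology: weak-* topology, i.e. the topology of pointwise convergence on A(B)
  (coordinates outside A(B) are constantly 0 on Delta).\<close>
definition gelfand_top :: "('a \<Rightarrow> real) set \<Rightarrow> (('a \<Rightarrow> complex) \<Rightarrow> complex) topology" where
  "gelfand_top B = subtopology (product_topology (\<lambda>_. euclidean) UNIV) (spectrum_chars B)"

definition gelfand :: "('a \<Rightarrow> complex) \<Rightarrow> (('a \<Rightarrow> complex) \<Rightarrow> complex) \<Rightarrow> complex" where
  "gelfand a = (\<lambda>\<phi>. \<phi> a)"

definition borel_sets_of :: "'b topology \<Rightarrow> 'b set set" where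
  "borel_sets_of T = sigma_sets (topspace T) {U. openin T U}"

definition radon_measure :: "'b topology \<Rightarrow> 'b measure \<Rightarrow> bool" where
  "radon_measure T N \<longleftrightarrow>
     space N = topspace T \<and> sets N = borel_sets_of T \<and>
     (\<forall>K. compactin T K \<longrightarrow> emeasure N K < \<infinity>) \<and>
     (\<forall>E\<in>sets N. emeasure N E = (INF U\<in>{U. openin T U \<and> E \<subseteq> U}. emeasure N U)) \<and>
     (\<forall>U. openin T U \<longrightarrow> emeasure N U = (SUP K\<in>{K. compactin T K \<and> K \<subseteq> U}. emeasure N K))"

definition sigmaB :: "('a \<Rightarrow> real) set \<Rightarrow> 'a set set" where
  "sigmaB B = sigma_sets UNIV {f -` U | f U. f \<in> B \<and> open U}"

definition DB :: "('a \<Rightarrow> real) set \<Rightarrow> 'a measure set" where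
  "DB B = {M. space M = UNIV \<and> sets M = sigmaB B \<and> (\<forall>f\<in>B. integrable M f)}"

definition is_hat_measure :: "('a \<Rightarrow> real) set \<Rightarrow> 'a measure \<Rightarrow> (('a \<Rightarrow> complex) \<Rightarrow> complex) measure \<Rightarrow> bool" where
  "is_hat_measure B M N \<longleftrightarrow>
     radon_measure (gelfand_top B) N \<and>
     (\<forall>g\<in>algA B.
        (\<forall>\<phi>\<in>spectrum_chars B. gelfand g \<phi> \<in> \<real> \<and> Re (gelfand g \<phi>) \<ge> 0) \<longrightarrow>
        compactin (gelfand_top B) (gelfand_top B closure_of {\<phi>\<in>spectrum_chars B. gelfand g \<phi> \<noteq> 0}) \<longrightarrow>
        (\<forall>fs::nat \<Rightarrow> 'a \<Rightarrow> real.
           (\<forall>n. fs n \<in> B) \<longrightarrow> (\<forall>n x. fs n x \<ge> 0) \<longrightarrow> (\<forall>n x. fs n x \<le> fs (Suc n) x) \<longrightarrow>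
           (\<forall>x. (\<lambda>n. complex_of_real (fs n x)) \<longlonglongrightarrow> g x) \<longrightarrow>
           (\<integral>\<^sup>+ \<phi>. ennreal (Re (gelfand g \<phi>)) \<partial>N) = (SUP n. ennreal (\<integral> x. fs n x \<partial>M))))"

end

theory Submission
  imports Defs
begin

text \<open>
  Every character \<open>\<phi>\<close> of \<open>A(B)\<close> is bounded by the sup norm (apply it to high powers), maps
  nonnegative functions of \<open>B\<close> to nonnegative reals, and commutes with the truncations
  \<open>h \<mapsto> max (h - c) 0\<close>; in particular \<open>\<phi>(f\<^sup>2) = |\<phi>(f)|\<^sup>2\<close>. So for \<open>c > 0\<close> the Gelfand
  transform of \<open>max (f\<^sup>2 - c) 0 \<in> B\<close> is \<open>\<phi> \<mapsto> max (|\<phi>(f)|\<^sup>2 - c) 0\<close>, supported in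
  \<open>{\<phi>. Re \<phi>(f\<^sup>2) \<ge> c}\<close>, which is compact by Tychonoff's theorem because the characters are
  uniformly bounded. The defining property of the measure \<open>N\<close> on the spectrum then equates the
  integrals of these truncations against \<open>M\<close> and \<open>N\<close>, and monotone convergence as \<open>c \<down> 0\<close>
  yields the claim.
\<close>

definition of_real_fun :: "('a \<Rightarrow> real) \<Rightarrow> 'a \<Rightarrow> complex" where
  "of_real_fun h = (\<lambda>x. complex_of_real (h x))"

lemma of_real_fun_apply [simp]: "of_real_fun h x = complex_of_real (h x)"
  by (simp add: of_real_fun_def)

definition sup_norm :: "('a \<Rightarrow> complex) \<Rightarrow> real" where
  "sup_norm a = (SUP x. cmod (a x))"

lemma le_if_powers_le_const_mult:
  fixes z c D :: real
  assumes "z \<ge> 0" "c \<ge> 0" and powers: "\<And>n. z ^ Suc n \<le> D * c ^ Suc n"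
  shows "z \<le> c"
proof (rule ccontr)
  assume "\<not> z \<le> c"
  moreover have "c \<noteq> 0" using powers[of 0] \<open>\<not> z \<le> c\<close> \<open>z \<ge> 0\<close> by auto
  ultimately have "c > 0" "1 < z / c" using \<open>c \<ge> 0\<close> by auto
  then obtain n where n: "D < (z / c) ^ n" using real_arch_pow by blast
  have "(z / c) ^ n \<le> (z / c) ^ Suc n" using \<open>1 < z / c\<close> by (intro power_increasing) auto
  also have "\<dots> = z ^ Suc n / c ^ Suc n" by (simp only: power_divide)
  also have "\<dots> \<le> D" using powers[of n] \<open>c > 0\<close> by (simp add: divide_le_eq)
  finally show False using n by simp
qed

text \<open>Unless \<open>\<rho>\<close> vanishes on \<open>(0, \<infinity>)\<close>, the two alternatives of the dichotomy meet at
  \<open>s = sup {c. \<rho> c \<noteq> 0}\<close>, which forces \<open>z = s\<close>.\<close>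
lemma nonneg_real_of_truncations:
  fixes z :: complex and \<rho> :: "real \<Rightarrow> complex"
  assumes lipschitz: "\<And>c d. c > 0 \<Longrightarrow> d > 0 \<Longrightarrow> cmod (\<rho> c - \<rho> d) \<le> \<bar>c - d\<bar>"
    and vanishing: "\<And>c. c \<ge> R \<Longrightarrow> \<rho> c = 0"
    and dichotomy: "\<And>c. c > 0 \<Longrightarrow> \<rho> c = 0 \<and> cmod z \<le> c \<or> \<rho> c = z - of_real c"
  shows "\<exists>t\<ge>0. z = of_real t"
proof (cases "\<forall>c>0. \<rho> c = 0")
  case True
  then have "cmod z \<le> 0 + e" if "e > 0" for e
    using dichotomy[OF that] that by auto
  then have "z = 0" by (metis field_le_epsilon norm_le_zero_iff)
  then show ?thesis by auto
next
  case False
  define S where "S = {c. c > 0 \<and> \<rho> c \<noteq> 0}"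
  have "S \<noteq> {}" using False by (auto simp: S_def)
  have "c \<le> R" if "c \<in> S" for c
    using vanishing[of c] that unfolding S_def by (cases "R \<le> c") auto
  then have "bdd_above S" by (rule bdd_aboveI)
  define s where "s = Sup S"
  have le_s: "c \<le> s" if "c \<in> S" for c
    unfolding s_def using cSup_upper[OF that \<open>bdd_above S\<close>] .
  have "s > 0" using \<open>S \<noteq> {}\<close> le_s by (force simp: S_def)
  have "\<rho> s = 0"
  proof -
    have "cmod (\<rho> s) \<le> 0 + e" if "e > 0" for e
    proof -
      have "\<rho> (s + e) = 0" using le_s[of "s + e"] \<open>s > 0\<close> that by (force simp: S_def)
      then show ?thesis using lipschitz[of s "s + e"] \<open>s > 0\<close> that by simp
    qed
    then show ?thesis by (metis field_le_epsilon norm_le_zero_iff)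
  qed
  have "cmod (z - of_real s) \<le> 0 + e" if "e > 0" for e
  proof -
    obtain c where "c \<in> S" "s - e / 2 < c"
      using less_cSupE[OF _ \<open>S \<noteq> {}\<close>, of "s - e / 2"] \<open>e > 0\<close> unfolding s_def by auto
    then have "c > 0" "\<rho> c = z - of_real c" using dichotomy by (auto simp: S_def)
    then have "z - of_real s = (\<rho> c - \<rho> s) + of_real (c - s)" using \<open>\<rho> s = 0\<close> by simp
    then have "cmod (z - of_real s) \<le> cmod (\<rho> c - \<rho> s) + \<bar>c - s\<bar>"
      by (metis norm_of_real norm_triangle_ineq)
    also have "\<dots> \<le> 2 * \<bar>c - s\<bar>" using lipschitz[OF \<open>c > 0\<close> \<open>s > 0\<close>] by simp
    finally show ?thesis using le_s[OF \<open>c \<in> S\<close>] \<open>s - e / 2 < c\<close> by simp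
  qed
  then have "z = of_real s" by (metis field_le_epsilon norm_le_zero_iff right_minus_eq)
  then show ?thesis using \<open>s > 0\<close> by auto
qed

text \<open>No sign condition on \<open>g\<close> is needed: \<open>ennreal\<close> maps negative values to 0 on both sides.\<close>
lemma nn_integral_eq_SUP_pos_part:
  fixes g :: "'a \<Rightarrow> real"
  assumes [measurable]: "g \<in> borel_measurable M"
  shows "(\<integral>\<^sup>+ x. ennreal (g x) \<partial>M) = (SUP n. \<integral>\<^sup>+ x. ennreal (max (g x - 1 / Suc n) 0) \<partial>M)"
proof -
  have inc: "incseq (\<lambda>n. ennreal (max (t - 1 / Suc n) 0))" for t :: real
    by (intro incseq_SucI ennreal_leI max.mono diff_left_mono) (auto simp: frac_le)
  have "(\<lambda>n. ennreal (max (t - 1 / Suc n) 0)) \<longlonglongrightarrow> ennreal t" for t :: real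
  proof -
    have "(\<lambda>n. max (t - 1 / Suc n) 0) \<longlonglongrightarrow> max (t - 0) 0"
      by (intro tendsto_max tendsto_diff tendsto_const LIMSEQ_Suc[OF lim_const_over_n])
    then have "(\<lambda>n. ennreal (max (t - 1 / Suc n) 0)) \<longlonglongrightarrow> ennreal (max (t - 0) 0)"
      by (rule tendsto_ennrealI)
    moreover have "ennreal (max (t - 0) 0) = ennreal t" by (simp add: max_def ennreal_neg)
    ultimately show ?thesis by (simp only:)
  qed
  then have SUP_eq: "(SUP n. ennreal (max (t - 1 / Suc n) 0)) = ennreal t" for t
    using LIMSEQ_SUP[OF inc] LIMSEQ_unique by blast
  then have "(\<integral>\<^sup>+ x. ennreal (g x) \<partial>M) = (\<integral>\<^sup>+ x. (SUP n. ennreal (max (g x - 1 / Suc n) 0)) \<partial>M)"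
    by (simp add: SUP_eq)
  also have "\<dots> = (SUP n. \<integral>\<^sup>+ x. ennreal (max (g x - 1 / Suc n) 0) \<partial>M)"
    using inc by (intro nn_integral_monotone_convergence_SUP) (auto simp: incseq_def le_fun_def)
  finally show ?thesis .
qed

abbreviation pointwise_topology :: "('i \<Rightarrow> complex) topology" where
  "pointwise_topology \<equiv> product_topology (\<lambda>_. euclidean) UNIV"

lemma continuous_map_evaluation: "continuous_map pointwise_topology euclidean (\<lambda>\<phi>. \<phi> a)"
  using continuous_map_product_projection[of a UNIV "\<lambda>_. euclidean"] by simp

lemma continuous_map_mult:
  fixes F G :: "_ \<Rightarrow> 'b::real_normed_algebra"
  shows "continuous_map X euclidean F \<Longrightarrow> continuous_map X euclidean G \<Longrightarrow> continuous_map X euclidean (\<lambda>x. F x * G x)"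
  by (simp add: continuous_map_atin tendsto_mult)

lemma continuous_map_Re:
  "continuous_map X euclidean F \<Longrightarrow> continuous_map X euclidean (\<lambda>x. Re (F x))"
  by (simp add: continuous_map_atin tendsto_Re)

lemma closedin_Collect_all:
  assumes "\<And>i. closedin pointwise_topology {\<phi>. P i \<phi>}"
  shows "closedin pointwise_topology {\<phi>. \<forall>i. P i \<phi>}"
proof -
  have "closedin pointwise_topology (\<Inter>i. {\<phi>. P i \<phi>})" using assms by (intro closedin_Inter) auto
  moreover have "(\<Inter>i. {\<phi>. P i \<phi>}) = {\<phi>. \<forall>i. P i \<phi>}" by auto
  ultimately show ?thesis by simp
qed

lemma closedin_Collect_imp:
  "(Q \<Longrightarrow> closedin pointwise_topology {\<phi>. P \<phi>}) \<Longrightarrow> closedin pointwise_topology {\<phi>. Q \<longrightarrow> P \<phi>}"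
  by (cases Q) (auto simp: closedin_topspace[of pointwise_topology, simplified])

lemma closedin_Collect_ball:
  "(\<And>i. i \<in> A \<Longrightarrow> closedin pointwise_topology {\<phi>. P i \<phi>}) \<Longrightarrow> closedin pointwise_topology {\<phi>. \<forall>i\<in>A. P i \<phi>}"
  unfolding Ball_def by (intro closedin_Collect_all closedin_Collect_imp)

lemma closedin_Collect_eq:
  fixes F G :: "_ \<Rightarrow> 'b::real_normed_vector"
  assumes "continuous_map pointwise_topology euclidean F" "continuous_map pointwise_topology euclidean G"
  shows "closedin pointwise_topology {\<phi>. F \<phi> = G \<phi>}"
  using closedin_continuous_map_preimage[OF continuous_map_diff[OF assms], of "{0}"] by simp

lemma closedin_Collect_le:
  fixes F G :: "_ \<Rightarrow> real"
  assumes "continuous_map pointwise_topology euclidean F" "continuous_map pointwise_topology euclidean G"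
  shows "closedin pointwise_topology {\<phi>. F \<phi> \<le> G \<phi>}"
  using closedin_continuous_map_preimage[OF continuous_map_diff[OF assms(2,1)], of "{0..}"] by simp

section \<open>The algebra A(B)\<close>

lemma algA_approx:
  assumes "a \<in> algA B" "e > 0"
  obtains f g r where "f \<in> B" "g \<in> B" "r < e"
    "\<And>x. cmod (a x - (of_real (f x) + \<i> * of_real (g x))) \<le> r"
  using assms unfolding algA_def by blast

lemma algA_of_real_plus_i_times:
  assumes "f \<in> B" "g \<in> B"
  shows "(\<lambda>x. of_real (f x) + \<i> * of_real (g x)) \<in> algA B"
  unfolding algA_def using assms by (intro CollectI allI impI bexI[of _ f] bexI[of _ g] exI[of _ 0]) auto

locale admissible =
  fixes B :: "('a \<Rightarrow> real) set"
  assumes admissible_space: "admissible_space B"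
begin

lemma zero_mem: "(\<lambda>x. 0) \<in> B"
  using admissible_space by (simp add: admissible_space_def)

lemma add_mem: "f \<in> B \<Longrightarrow> g \<in> B \<Longrightarrow> (\<lambda>x. f x + g x) \<in> B"
  using admissible_space by (simp add: admissible_space_def)

lemma scale_mem: "f \<in> B \<Longrightarrow> (\<lambda>x. c * f x) \<in> B"
  using admissible_space by (simp add: admissible_space_def)

lemma mult_mem: "f \<in> B \<Longrightarrow> g \<in> B \<Longrightarrow> (\<lambda>x. f x * g x) \<in> B"
  using admissible_space by (simp add: admissible_space_def)

lemma min_one_mem: "f \<in> B \<Longrightarrow> (\<lambda>x. min (f x) 1) \<in> B"
  using admissible_space by (simp add: admissible_space_def)

lemma bounded: "f \<in> B \<Longrightarrow> \<exists>C. \<forall>x. \<bar>f x\<bar> \<le> C"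
  using admissible_space by (simp add: admissible_space_def)

lemma diff_mem: "f \<in> B \<Longrightarrow> g \<in> B \<Longrightarrow> (\<lambda>x. f x - g x) \<in> B"
  using add_mem[of f "\<lambda>x. -1 * g x"] scale_mem[of g "-1"] by simp

lemma power_mem: "f \<in> B \<Longrightarrow> (\<lambda>x. f x ^ Suc n) \<in> B"
  by (induction n) (use mult_mem[of f] in auto)

lemma min_const_mem:
  assumes "f \<in> B" "c > 0"
  shows "(\<lambda>x. min (f x) c) \<in> B"
proof -
  have "(\<lambda>x. c * min ((1 / c) * f x) 1) \<in> B"
    using scale_mem min_one_mem scale_mem[OF assms(1)] by blast
  moreover have "c * min ((1 / c) * f x) 1 = min (f x) c" for x
    using assms(2) by (simp add: min_mult_distrib_left)
  ultimately show ?thesis by simp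
qed

lemma pos_part_mem:
  assumes "f \<in> B" "c > 0"
  shows "(\<lambda>x. max (f x - c) 0) \<in> B"
proof -
  have "(\<lambda>x. max (f x - c) 0) = (\<lambda>x. f x - min (f x) c)"
    by (auto simp: fun_eq_iff max_def min_def)
  with diff_mem[OF assms(1) min_const_mem[OF assms]] show ?thesis by simp
qed

lemma of_real_fun_mem_algA: "f \<in> B \<Longrightarrow> of_real_fun f \<in> algA B"
  using algA_of_real_plus_i_times[OF _ zero_mem, of f] by (simp add: of_real_fun_def)

lemma i_times_mem_algA: "g \<in> B \<Longrightarrow> (\<lambda>x. \<i> * of_real_fun g x) \<in> algA B"
  using algA_of_real_plus_i_times[OF zero_mem, of g] by simp

lemma algA_diff:
  assumes a: "a \<in> algA B" and b: "b \<in> algA B"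
  shows "(\<lambda>x. a x - b x) \<in> algA B"
  unfolding algA_def
proof (intro CollectI allI impI)
  fix e :: real assume "e > 0"
  then obtain f1 g1 r1 f2 g2 r2 where
    "f1 \<in> B" "g1 \<in> B" "r1 < e / 2" and approx1: "\<And>x. cmod (a x - (of_real (f1 x) + \<i> * of_real (g1 x))) \<le> r1" and
    "f2 \<in> B" "g2 \<in> B" "r2 < e / 2" and approx2: "\<And>x. cmod (b x - (of_real (f2 x) + \<i> * of_real (g2 x))) \<le> r2"
    using algA_approx[OF a, of "e / 2"] algA_approx[OF b, of "e / 2"] by (metis half_gt_zero)
  have approx: "cmod (a x - b x - (of_real (f1 x - f2 x) + \<i> * of_real (g1 x - g2 x))) \<le> r1 + r2" for x
  proof -
    have "a x - b x - (of_real (f1 x - f2 x) + \<i> * of_real (g1 x - g2 x))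
        = (a x - (of_real (f1 x) + \<i> * of_real (g1 x))) - (b x - (of_real (f2 x) + \<i> * of_real (g2 x)))"
      by (simp add: algebra_simps)
    then have "cmod (a x - b x - (of_real (f1 x - f2 x) + \<i> * of_real (g1 x - g2 x)))
        \<le> cmod (a x - (of_real (f1 x) + \<i> * of_real (g1 x))) + cmod (b x - (of_real (f2 x) + \<i> * of_real (g2 x)))"
      by (simp only: norm_triangle_ineq4)
    also have "\<dots> \<le> r1 + r2" using approx1 approx2 by (rule add_mono)
    finally show ?thesis .
  qed
  have "r1 + r2 < e" using \<open>r1 < e / 2\<close> \<open>r2 < e / 2\<close> by simp
  show "\<exists>f\<in>B. \<exists>g\<in>B. \<exists>r<e. \<forall>x. cmod (a x - b x - (of_real (f x) + \<i> * of_real (g x))) \<le> r"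
    by (rule bexI[OF _ diff_mem[OF \<open>f1 \<in> B\<close> \<open>f2 \<in> B\<close>]], rule bexI[OF _ diff_mem[OF \<open>g1 \<in> B\<close> \<open>g2 \<in> B\<close>]])
      (use approx \<open>r1 + r2 < e\<close> in blast)
qed

lemma norm_le_sup_norm:
  assumes a: "a \<in> algA B"
  shows "cmod (a x) \<le> sup_norm a"
proof -
  obtain f g r where "f \<in> B" "g \<in> B" "r < 1"
    and approx: "\<And>x. cmod (a x - (of_real (f x) + \<i> * of_real (g x))) \<le> r"
    using algA_approx[OF a, of 1] by auto
  obtain Cf Cg where Cf: "\<And>x. \<bar>f x\<bar> \<le> Cf" and Cg: "\<And>x. \<bar>g x\<bar> \<le> Cg"
    using bounded[OF \<open>f \<in> B\<close>] bounded[OF \<open>g \<in> B\<close>] by blast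
  have "cmod (a y) \<le> 1 + Cf + Cg" for y
  proof -
    have "cmod (a y) \<le> cmod (a y - (of_real (f y) + \<i> * of_real (g y))) + cmod (of_real (f y) + \<i> * of_real (g y))"
      using norm_triangle_sub[of "a y" "of_real (f y) + \<i> * of_real (g y)"] by (simp add: add.commute)
    also have "\<dots> \<le> r + (\<bar>f y\<bar> + \<bar>g y\<bar>)"
      using approx[of y] norm_triangle_ineq[of "of_real (f y)" "\<i> * of_real (g y)"]
      by (simp add: norm_mult)
    finally show ?thesis using Cf[of y] Cg[of y] \<open>r < 1\<close> by simp
  qed
  then have "bdd_above (range (\<lambda>x. cmod (a x)))" by (intro bdd_aboveI) auto
  then show ?thesis unfolding sup_norm_def by (rule cSUP_upper[OF UNIV_I])
qed

lemma sup_norm_nonneg: "a \<in> algA B \<Longrightarrow> 0 \<le> sup_norm a"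
  using norm_le_sup_norm[of a undefined] norm_ge_zero order_trans by blast

end

section \<open>Characters of A(B)\<close>

locale character = admissible +
  fixes \<phi> :: "('a \<Rightarrow> complex) \<Rightarrow> complex"
  assumes character: "\<phi> \<in> spectrum_chars B"
begin

lemma additive: "a \<in> algA B \<Longrightarrow> b \<in> algA B \<Longrightarrow> \<phi> (\<lambda>x. a x + b x) = \<phi> a + \<phi> b"
  using character unfolding spectrum_chars_def by blast

lemma homogeneous: "a \<in> algA B \<Longrightarrow> \<phi> (\<lambda>x. c * a x) = c * \<phi> a"
  using character unfolding spectrum_chars_def by blast

lemma multiplicative: "a \<in> algA B \<Longrightarrow> b \<in> algA B \<Longrightarrow> \<phi> (\<lambda>x. a x * b x) = \<phi> a * \<phi> b"
  using character unfolding spectrum_chars_def by blast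

lemma bounded_by_sup_norm:
  obtains C where "C \<ge> 0" "\<And>a. a \<in> algA B \<Longrightarrow> cmod (\<phi> a) \<le> C * sup_norm a"
proof -
  obtain C where C: "\<And>a. a \<in> algA B \<Longrightarrow> cmod (\<phi> a) \<le> C * sup_norm a"
    using character unfolding spectrum_chars_def sup_norm_def by blast
  have "cmod (\<phi> a) \<le> max C 0 * sup_norm a" if "a \<in> algA B" for a
    using C[OF that] sup_norm_nonneg[OF that] by (meson max.cobounded1 mult_right_mono order_trans)
  then show ?thesis using that[of "max C 0"] by simp
qed

lemma hom_add: "f \<in> B \<Longrightarrow> g \<in> B \<Longrightarrow> \<phi> (of_real_fun (\<lambda>x. f x + g x)) = \<phi> (of_real_fun f) + \<phi> (of_real_fun g)"
  using additive[OF of_real_fun_mem_algA of_real_fun_mem_algA] by (simp add: of_real_fun_def)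

lemma hom_scale: "f \<in> B \<Longrightarrow> \<phi> (of_real_fun (\<lambda>x. c * f x)) = of_real c * \<phi> (of_real_fun f)"
  using homogeneous[OF of_real_fun_mem_algA] by (simp add: of_real_fun_def)

lemma hom_mult: "f \<in> B \<Longrightarrow> g \<in> B \<Longrightarrow> \<phi> (of_real_fun (\<lambda>x. f x * g x)) = \<phi> (of_real_fun f) * \<phi> (of_real_fun g)"
  using multiplicative[OF of_real_fun_mem_algA of_real_fun_mem_algA] by (simp add: of_real_fun_def)

lemma hom_diff: "f \<in> B \<Longrightarrow> g \<in> B \<Longrightarrow> \<phi> (of_real_fun (\<lambda>x. f x - g x)) = \<phi> (of_real_fun f) - \<phi> (of_real_fun g)"
  using hom_add[of f "\<lambda>x. -1 * g x"] hom_scale[of g "-1"] scale_mem[of g "-1"] by simp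

lemma hom_zero: "\<phi> (of_real_fun (\<lambda>x. 0)) = 0"
  using hom_scale[OF zero_mem, of 0] by simp

lemma hom_power: "f \<in> B \<Longrightarrow> \<phi> (of_real_fun (\<lambda>x. f x ^ Suc n)) = \<phi> (of_real_fun f) ^ Suc n"
  by (induction n) (use hom_mult[OF _ power_mem] in auto)

text \<open>The a priori bound of a character is improved to the optimal one by applying it to
  high powers: a spectral radius argument.\<close>
lemma norm_le:
  assumes "f \<in> B" and bound: "\<And>x. \<bar>f x\<bar> \<le> c"
  shows "cmod (\<phi> (of_real_fun f)) \<le> c"
proof -
  obtain C where "C \<ge> 0" and C: "\<And>a. a \<in> algA B \<Longrightarrow> cmod (\<phi> a) \<le> C * sup_norm a"
    using bounded_by_sup_norm by blast
  have "c \<ge> 0" using bound[of undefined] by linarith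
  show ?thesis
  proof (rule le_if_powers_le_const_mult[of _ _ C])
    show "cmod (\<phi> (of_real_fun f)) \<ge> 0" "c \<ge> 0" using \<open>c \<ge> 0\<close> by auto
    fix n
    define p where "p = of_real_fun (\<lambda>x. f x ^ Suc n)"
    have "p \<in> algA B" unfolding p_def using of_real_fun_mem_algA power_mem \<open>f \<in> B\<close> by blast
    have p_le: "cmod (p x) \<le> c ^ Suc n" for x
      unfolding p_def using bound[of x]
      by (simp add: norm_power power_mono del: power_Suc)
    have "sup_norm p \<le> c ^ Suc n"
      unfolding sup_norm_def by (rule cSUP_least) (use p_le in auto)
    have "cmod (\<phi> (of_real_fun f)) ^ Suc n = cmod (\<phi> p)"
      unfolding p_def hom_power[OF \<open>f \<in> B\<close>] by (simp only: norm_power)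
    also have "\<dots> \<le> C * sup_norm p" using C[OF \<open>p \<in> algA B\<close>] .
    also have "\<dots> \<le> C * c ^ Suc n" using \<open>sup_norm p \<le> c ^ Suc n\<close> \<open>C \<ge> 0\<close> by (rule mult_left_mono)
    finally show "cmod (\<phi> (of_real_fun f)) ^ Suc n \<le> C * c ^ Suc n" .
  qed
qed

text \<open>From \<open>max (h - c) 0 * min h c = c * max (h - c) 0\<close> and \<open>h = min h c + max (h - c) 0\<close>.\<close>
lemma truncation_dichotomy:
  assumes "h \<in> B" "\<And>x. h x \<ge> 0" "c > 0"
  defines "r \<equiv> \<phi> (of_real_fun (\<lambda>x. max (h x - c) 0))"
  shows "r = 0 \<and> cmod (\<phi> (of_real_fun h)) \<le> c \<or> r = \<phi> (of_real_fun h) - of_real c"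
proof -
  define m where "m = (\<lambda>x. min (h x) c)"
  define p where "p = (\<lambda>x. max (h x - c) 0)"
  have "m \<in> B" "p \<in> B" unfolding m_def p_def using min_const_mem pos_part_mem assms by auto
  have r_p: "r = \<phi> (of_real_fun p)" unfolding r_def p_def ..
  have "(\<lambda>x. p x * m x) = (\<lambda>x. c * p x)" by (auto simp: p_def m_def fun_eq_iff)
  then have r_m: "r * \<phi> (of_real_fun m) = of_real c * r"
    unfolding r_p hom_mult[OF \<open>p \<in> B\<close> \<open>m \<in> B\<close>, symmetric] hom_scale[OF \<open>p \<in> B\<close>, symmetric]
    by simp
  have "h = (\<lambda>x. m x + p x)" by (auto simp: p_def m_def fun_eq_iff)
  then have h_split: "\<phi> (of_real_fun h) = \<phi> (of_real_fun m) + r"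
    using hom_add[OF \<open>m \<in> B\<close> \<open>p \<in> B\<close>] unfolding r_p by simp
  have "cmod (\<phi> (of_real_fun m)) \<le> c"
    using norm_le[OF \<open>m \<in> B\<close>] assms(2,3) by (simp add: m_def)
  then show ?thesis
    using r_m h_split by (cases "r = 0") (auto simp: mult.commute)
qed

lemma nonneg_real:
  assumes "h \<in> B" "\<And>x. h x \<ge> 0"
  shows "\<exists>t\<ge>0. \<phi> (of_real_fun h) = of_real t"
proof -
  obtain R where R: "\<And>x. \<bar>h x\<bar> \<le> R" using bounded[OF \<open>h \<in> B\<close>] by blast
  define \<rho> where "\<rho> c = \<phi> (of_real_fun (\<lambda>x. max (h x - c) 0))" for c
  show ?thesis
  proof (rule nonneg_real_of_truncations[of \<rho> R])
    fix c d :: real assume "c > 0" "d > 0"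
    have "\<rho> c - \<rho> d = \<phi> (of_real_fun (\<lambda>x. max (h x - c) 0 - max (h x - d) 0))"
      unfolding \<rho>_def using hom_diff pos_part_mem \<open>h \<in> B\<close> \<open>c > 0\<close> \<open>d > 0\<close> by simp
    also have "cmod \<dots> \<le> \<bar>c - d\<bar>"
      using \<open>h \<in> B\<close> \<open>c > 0\<close> \<open>d > 0\<close> by (intro norm_le diff_mem pos_part_mem) (auto simp: max_def)
    finally show "cmod (\<rho> c - \<rho> d) \<le> \<bar>c - d\<bar>" .
  next
    fix c assume "c \<ge> R"
    then have "h x \<le> c" for x using R[of x] by simp
    then have "(\<lambda>x. max (h x - c) 0) = (\<lambda>x. 0)" by (simp add: fun_eq_iff)
    then show "\<rho> c = 0" unfolding \<rho>_def using hom_zero by simp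
  next
    fix c :: real assume "c > 0"
    then show "\<rho> c = 0 \<and> cmod (\<phi> (of_real_fun h)) \<le> c \<or> \<rho> c = \<phi> (of_real_fun h) - of_real c"
      unfolding \<rho>_def using truncation_dichotomy assms by blast
  qed
qed

lemma pos_part:
  assumes "h \<in> B" "\<And>x. h x \<ge> 0" "c > 0" "\<phi> (of_real_fun h) = of_real t"
  shows "\<phi> (of_real_fun (\<lambda>x. max (h x - c) 0)) = of_real (max (t - c) 0)"
proof -
  obtain u where "u \<ge> 0" "\<phi> (of_real_fun (\<lambda>x. max (h x - c) 0)) = of_real u"
    using nonneg_real[OF pos_part_mem[OF \<open>h \<in> B\<close> \<open>c > 0\<close>]] by auto
  with truncation_dichotomy[OF assms(1-3)] assms(4) show ?thesis
    by (auto simp flip: of_real_diff)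
qed

lemma square: "f \<in> B \<Longrightarrow> \<phi> (of_real_fun (\<lambda>x. (f x)\<^sup>2)) = of_real ((cmod (\<phi> (of_real_fun f)))\<^sup>2)"
proof -
  assume "f \<in> B"
  define w where "w = \<phi> (of_real_fun f)"
  have "\<phi> (of_real_fun (\<lambda>x. (f x)\<^sup>2)) = w\<^sup>2"
    using hom_mult[OF \<open>f \<in> B\<close> \<open>f \<in> B\<close>] unfolding w_def by (simp add: power2_eq_square)
  moreover obtain t where "t \<ge> 0" "\<phi> (of_real_fun (\<lambda>x. (f x)\<^sup>2)) = of_real t"
    using nonneg_real[OF mult_mem[OF \<open>f \<in> B\<close> \<open>f \<in> B\<close>] zero_le_square]
    by (auto simp: power2_eq_square)
  ultimately have "w\<^sup>2 = of_real t" by simp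
  then have "Re w * Im w = 0" "(Re w)\<^sup>2 - (Im w)\<^sup>2 = t"
    by (auto simp: complex_eq_iff power2_eq_square)
  with \<open>t \<ge> 0\<close> have "Im w = 0" by (smt (verit) mult_eq_0_iff power2_less_0 zero_less_power2)
  then have "w\<^sup>2 = of_real ((cmod w)\<^sup>2)"
    by (simp add: complex_eq_iff power2_eq_square cmod_def)
  with \<open>\<phi> (of_real_fun (\<lambda>x. (f x)\<^sup>2)) = w\<^sup>2\<close> show ?thesis unfolding w_def by simp
qed

lemma norm_of_real_plus_i_times_le:
  assumes "f \<in> B" "g \<in> B" and bound: "\<And>x. cmod (of_real (f x) + \<i> * of_real (g x)) \<le> s"
  shows "cmod (\<phi> (\<lambda>x. of_real (f x) + \<i> * of_real (g x))) \<le> 2 * s"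
proof -
  have "\<phi> (\<lambda>x. of_real (f x) + \<i> * of_real (g x)) = \<phi> (of_real_fun f) + \<i> * \<phi> (of_real_fun g)"
    using additive[OF of_real_fun_mem_algA[OF \<open>f \<in> B\<close>] i_times_mem_algA[OF \<open>g \<in> B\<close>]]
      homogeneous[OF of_real_fun_mem_algA[OF \<open>g \<in> B\<close>]] by simp
  moreover have "cmod (\<phi> (of_real_fun f)) \<le> s"
    using norm_le[OF \<open>f \<in> B\<close>] abs_Re_le_cmod bound order_trans by fastforce
  moreover have "cmod (\<phi> (of_real_fun g)) \<le> s"
    using norm_le[OF \<open>g \<in> B\<close>] abs_Im_le_cmod bound order_trans by fastforce
  ultimately show ?thesis
    using norm_triangle_ineq[of "\<phi> (of_real_fun f)" "\<i> * \<phi> (of_real_fun g)"] by (simp add: norm_mult)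
qed

text \<open>The constant 2 comes from estimating real and imaginary parts separately; any uniform
  bound would do for the compactness argument.\<close>
lemma norm_le_twice_sup_norm:
  assumes a: "a \<in> algA B"
  shows "cmod (\<phi> a) \<le> 2 * sup_norm a"
proof -
  obtain C where "C \<ge> 0" and C: "\<And>a. a \<in> algA B \<Longrightarrow> cmod (\<phi> a) \<le> C * sup_norm a"
    using bounded_by_sup_norm by blast
  define K where "K = C + 2"
  have "cmod (\<phi> a) \<le> 2 * sup_norm a + e" if "e > 0" for e
  proof -
    have "e / K > 0" using \<open>e > 0\<close> \<open>C \<ge> 0\<close> by (simp add: K_def)
    then obtain f g r where "f \<in> B" "g \<in> B" "r < e / K"
      and approx: "\<And>x. cmod (a x - (of_real (f x) + \<i> * of_real (g x))) \<le> r"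
      using algA_approx[OF a] by metis
    define p where "p = (\<lambda>x. of_real (f x) + \<i> * of_real (g x) :: complex)"
    define q where "q = (\<lambda>x. a x - p x)"
    have "p \<in> algA B" unfolding p_def using \<open>f \<in> B\<close> \<open>g \<in> B\<close> by (rule algA_of_real_plus_i_times)
    have "q \<in> algA B" unfolding q_def using a \<open>p \<in> algA B\<close> by (rule algA_diff)
    have "\<phi> a = \<phi> q + \<phi> p" using additive[OF \<open>q \<in> algA B\<close> \<open>p \<in> algA B\<close>] by (simp add: q_def)
    have "sup_norm q \<le> r"
      unfolding sup_norm_def q_def p_def by (rule cSUP_least) (use approx in auto)
    then have "cmod (\<phi> q) \<le> C * r"
      using C[OF \<open>q \<in> algA B\<close>] \<open>C \<ge> 0\<close> by (meson mult_left_mono order_trans)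
    moreover have "cmod (\<phi> p) \<le> 2 * (sup_norm a + r)"
      unfolding p_def using \<open>f \<in> B\<close> \<open>g \<in> B\<close>
    proof (rule norm_of_real_plus_i_times_le)
      fix x
      have "cmod (of_real (f x) + \<i> * of_real (g x)) \<le> cmod (a x) + cmod (a x - (of_real (f x) + \<i> * of_real (g x)))"
        using norm_triangle_sub[of "of_real (f x) + \<i> * of_real (g x)" "a x"] by (simp add: norm_minus_commute)
      then show "cmod (of_real (f x) + \<i> * of_real (g x)) \<le> sup_norm a + r"
        using norm_le_sup_norm[OF a, of x] approx[of x] by simp
    qed
    ultimately have "cmod (\<phi> a) \<le> 2 * sup_norm a + K * r"
      using \<open>\<phi> a = \<phi> q + \<phi> p\<close> norm_triangle_ineq[of "\<phi> q" "\<phi> p"] by (simp add: K_def algebra_simps)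
    also have "K * r \<le> e" using \<open>r < e / K\<close> \<open>C \<ge> 0\<close> by (simp add: K_def field_simps)
    finally show ?thesis by simp
  qed
  then show ?thesis by (rule field_le_epsilon)
qed

end

section \<open>Compactness in the Gelfand topology\<close>

text \<open>The characters without the condition \<open>\<phi> \<noteq> 0\<close>, and with the bound of each character
  replaced by a uniform one: a closed subset of a product of compact discs.\<close>
definition bounded_homs :: "('a \<Rightarrow> real) set \<Rightarrow> (('a \<Rightarrow> complex) \<Rightarrow> complex) set" where
  "bounded_homs B = {\<phi>.
     (\<forall>a. a \<notin> algA B \<longrightarrow> \<phi> a = 0) \<and>
     (\<forall>a\<in>algA B. \<forall>b\<in>algA B. \<phi> (\<lambda>x. a x + b x) = \<phi> a + \<phi> b) \<and>
     (\<forall>a\<in>algA B. \<forall>c::complex. \<phi> (\<lambda>x. c * a x) = c * \<phi> a) \<and>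
     (\<forall>a\<in>algA B. \<forall>b\<in>algA B. \<phi> (\<lambda>x. a x * b x) = \<phi> a * \<phi> b) \<and>
     (\<forall>a\<in>algA B. cmod (\<phi> a) \<le> 2 * sup_norm a)}"

lemma closedin_bounded_homs: "closedin pointwise_topology (bounded_homs B)"
proof -
  note ev = continuous_map_evaluation and const = continuous_map_const[THEN iffD2, OF disjI2]
  have "closedin pointwise_topology {\<phi>. \<forall>a. a \<notin> algA B \<longrightarrow> \<phi> a = 0}"
    by (intro closedin_Collect_all closedin_Collect_imp closedin_Collect_eq ev const) simp
  moreover have "closedin pointwise_topology {\<phi>. \<forall>a\<in>algA B. \<forall>b\<in>algA B. \<phi> (\<lambda>x. a x + b x) = \<phi> a + \<phi> b}"
    by (intro closedin_Collect_ball closedin_Collect_eq ev continuous_map_add)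
  moreover have "closedin pointwise_topology {\<phi>. \<forall>a\<in>algA B. \<forall>c::complex. \<phi> (\<lambda>x. c * a x) = c * \<phi> a}"
    by (intro closedin_Collect_ball closedin_Collect_all closedin_Collect_eq ev continuous_map_mult const) simp
  moreover have "closedin pointwise_topology {\<phi>. \<forall>a\<in>algA B. \<forall>b\<in>algA B. \<phi> (\<lambda>x. a x * b x) = \<phi> a * \<phi> b}"
    by (intro closedin_Collect_ball closedin_Collect_eq ev continuous_map_mult)
  moreover have "closedin pointwise_topology {\<phi>. \<forall>a\<in>algA B. cmod (\<phi> a) \<le> 2 * sup_norm a}"
    by (intro closedin_Collect_ball closedin_Collect_le ev continuous_map_norm const) simp
  ultimately show ?thesis
    unfolding bounded_homs_def Collect_conj_eq by (intro closedin_Int)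
qed

lemma compactin_bounded_homs: "compactin pointwise_topology (bounded_homs B)"
proof -
  define S where "S a = (if a \<in> algA B then cball 0 (2 * sup_norm a) else {0 :: complex})" for a
  have "compactin pointwise_topology (PiE UNIV S)"
    by (subst compactin_PiE) (auto simp: S_def)
  moreover have "bounded_homs B \<subseteq> PiE UNIV S"
    unfolding bounded_homs_def S_def by (auto simp: PiE_def)
  ultimately show ?thesis using closed_compactin closedin_bounded_homs by blast
qed

section \<open>Integration on the spectrum\<close>

lemma measurable_evaluation:
  assumes "radon_measure (gelfand_top B) N"
  shows "(\<lambda>\<phi>. \<phi> a) \<in> borel_measurable N"
proof (rule borel_measurableI)
  fix S :: "complex set" assume "open S"
  have N: "space N = topspace (gelfand_top B)" "sets N = borel_sets_of (gelfand_top B)"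
    using assms unfolding radon_measure_def by auto
  have "continuous_map (gelfand_top B) euclidean (\<lambda>\<phi>. \<phi> a)"
    unfolding gelfand_top_def by (rule continuous_map_from_subtopology[OF continuous_map_evaluation])
  then have "openin (gelfand_top B) {\<phi> \<in> topspace (gelfand_top B). \<phi> a \<in> S}"
    using \<open>open S\<close> by (intro openin_continuous_map_preimage) auto
  moreover have "(\<lambda>\<phi>. \<phi> a) -` S \<inter> space N = {\<phi> \<in> topspace (gelfand_top B). \<phi> a \<in> S}"
    using N by auto
  ultimately show "(\<lambda>\<phi>. \<phi> a) -` S \<inter> space N \<in> sets N"
    unfolding N borel_sets_of_def by (auto intro: sigma_sets.Basic)
qed

lemma is_hat_measureD:
  assumes "is_hat_measure B M N" "g \<in> algA B"
    and "\<forall>\<phi>\<in>spectrum_chars B. gelfand g \<phi> \<in> \<real> \<and> Re (gelfand g \<phi>) \<ge> 0"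
    and "compactin (gelfand_top B) (gelfand_top B closure_of {\<phi>\<in>spectrum_chars B. gelfand g \<phi> \<noteq> 0})"
    and "\<And>n. fs n \<in> B" "\<And>n x. fs n x \<ge> 0" "\<And>n x. fs n x \<le> fs (Suc n) x"
    and "\<And>x. (\<lambda>n. complex_of_real (fs n x)) \<longlonglongrightarrow> g x"
  shows "(\<integral>\<^sup>+ \<phi>. ennreal (Re (gelfand g \<phi>)) \<partial>N) = (SUP n. ennreal (\<integral> x. fs n x \<partial>M))"
  using assms unfolding is_hat_measure_def by blast

lemma space_hat_measure: "is_hat_measure B M N \<Longrightarrow> space N = spectrum_chars B"
  unfolding is_hat_measure_def radon_measure_def gelfand_top_def by simp

context admissible
begin

lemma characterI: "\<phi> \<in> spectrum_chars B \<Longrightarrow> character B \<phi>"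
  by unfold_locales

lemma spectrum_chars_eq: "spectrum_chars B = {\<phi> \<in> bounded_homs B. \<exists>a\<in>algA B. \<phi> a \<noteq> 0}"
proof (intro set_eqI iffI)
  fix \<phi> assume "\<phi> \<in> spectrum_chars B"
  with character.norm_le_twice_sup_norm[OF characterI[OF this]]
  show "\<phi> \<in> {\<phi> \<in> bounded_homs B. \<exists>a\<in>algA B. \<phi> a \<noteq> 0}"
    unfolding spectrum_chars_def bounded_homs_def by blast
next
  fix \<phi> assume "\<phi> \<in> {\<phi> \<in> bounded_homs B. \<exists>a\<in>algA B. \<phi> a \<noteq> 0}"
  then show "\<phi> \<in> spectrum_chars B"
    unfolding spectrum_chars_def bounded_homs_def sup_norm_def by blast
qed

text \<open>The superlevel set \<open>{\<phi>. Re \<phi>(h) \<ge> c}\<close> is compact by Tychonoff's theorem, since it avoids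
  the zero functional and characters are uniformly bounded.\<close>
lemma compactin_closure_support:
  assumes "h \<in> B" "c > 0"
    and support: "\<And>\<phi>. \<phi> \<in> spectrum_chars B \<Longrightarrow> \<phi> g \<noteq> 0 \<Longrightarrow> c \<le> Re (\<phi> (of_real_fun h))"
  shows "compactin (gelfand_top B) (gelfand_top B closure_of {\<phi>\<in>spectrum_chars B. gelfand g \<phi> \<noteq> 0})"
proof -
  define K where "K = bounded_homs B \<inter> {\<phi>. c \<le> Re (\<phi> (of_real_fun h))}"
  have "closedin pointwise_topology K"
    unfolding K_def
    by (intro closedin_Int closedin_bounded_homs closedin_Collect_le continuous_map_evaluation
        continuous_map_Re continuous_map_const[THEN iffD2, OF disjI2]) simp
  moreover have "compactin pointwise_topology K"
    using compactin_bounded_homs[of B] _ \<open>closedin pointwise_topology K\<close> by (rule closed_compactin) (simp add: K_def)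
  moreover have "K \<subseteq> spectrum_chars B"
  proof
    fix \<phi> assume "\<phi> \<in> K"
    then have "\<phi> (of_real_fun h) \<noteq> 0" using \<open>c > 0\<close> by (auto simp: K_def)
    with \<open>\<phi> \<in> K\<close> show "\<phi> \<in> spectrum_chars B"
      unfolding spectrum_chars_eq K_def using of_real_fun_mem_algA[OF \<open>h \<in> B\<close>] by blast
  qed
  ultimately have "compactin (gelfand_top B) K" "closedin (gelfand_top B) K"
    unfolding gelfand_top_def by (auto simp: compactin_subtopology closedin_subset_topspace)
  moreover have "{\<phi>\<in>spectrum_chars B. gelfand g \<phi> \<noteq> 0} \<subseteq> K"
    using support unfolding spectrum_chars_eq K_def gelfand_def by blast
  ultimately show ?thesis
    by (meson closed_compactin closedin_closure_of closure_of_minimal)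
qed

lemma Re_square_eq_norm_gelfand_square:
  assumes "\<phi> \<in> spectrum_chars B" "f \<in> B"
  shows "Re (\<phi> (of_real_fun (\<lambda>x. (f x)\<^sup>2))) = (cmod (gelfand (\<lambda>x. complex_of_real (f x)) \<phi>))\<^sup>2"
  using character.square[OF characterI[OF assms(1)] assms(2)]
  unfolding gelfand_def of_real_fun_def[of f, symmetric] by (simp del: of_real_power)

lemma nn_integral_hat_measure_pos_part:
  assumes "M \<in> DB B" "is_hat_measure B M N" "h \<in> B" "\<And>x. h x \<ge> 0" "c > 0"
  shows "(\<integral>\<^sup>+ \<phi>. ennreal (max (Re (\<phi> (of_real_fun h)) - c) 0) \<partial>N) = (\<integral>\<^sup>+ x. ennreal (max (h x - c) 0) \<partial>M)"
proof -
  define r where "r = (\<lambda>x. max (h x - c) 0)"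
  have "r \<in> B" unfolding r_def using pos_part_mem assms(3,5) .
  have transform: "\<phi> (of_real_fun r) = of_real (max (Re (\<phi> (of_real_fun h)) - c) 0)"
    if "\<phi> \<in> spectrum_chars B" for \<phi>
  proof -
    interpret character B \<phi> using that by (rule characterI)
    obtain t where "\<phi> (of_real_fun h) = of_real t" using nonneg_real assms(3,4) by blast
    with pos_part[OF assms(3,4,5)] show ?thesis unfolding r_def by simp
  qed
  have "(\<integral>\<^sup>+ \<phi>. ennreal (Re (gelfand (of_real_fun r) \<phi>)) \<partial>N) = (SUP n::nat. ennreal (\<integral> x. r x \<partial>M))"
  proof (rule is_hat_measureD[OF assms(2) of_real_fun_mem_algA[OF \<open>r \<in> B\<close>]])
    show "\<forall>\<phi>\<in>spectrum_chars B. gelfand (of_real_fun r) \<phi> \<in> \<real> \<and> Re (gelfand (of_real_fun r) \<phi>) \<ge> 0"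
      by (simp add: gelfand_def transform)
    show "compactin (gelfand_top B) (gelfand_top B closure_of {\<phi>\<in>spectrum_chars B. gelfand (of_real_fun r) \<phi> \<noteq> 0})"
      using assms(3,5) by (rule compactin_closure_support) (auto simp: transform max_def split: if_splits)
  qed (use \<open>r \<in> B\<close> in \<open>auto simp: r_def\<close>)
  also have "\<dots> = (\<integral>\<^sup>+ x. ennreal (r x) \<partial>M)"
    using assms(1) \<open>r \<in> B\<close> unfolding DB_def by (simp add: nn_integral_eq_integral r_def)
  also have "(\<integral>\<^sup>+ \<phi>. ennreal (Re (gelfand (of_real_fun r) \<phi>)) \<partial>N)
      = (\<integral>\<^sup>+ \<phi>. ennreal (max (Re (\<phi> (of_real_fun h)) - c) 0) \<partial>N)"
    using space_hat_measure[OF assms(2)] by (intro nn_integral_cong) (simp add: gelfand_def transform)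
  finally show ?thesis by (simp add: r_def)
qed

end

theorem mainTheorem9:
  fixes B :: "('a \<Rightarrow> real) set" and M :: "'a measure"
    and N :: "(('a \<Rightarrow> complex) \<Rightarrow> complex) measure"
  assumes "admissible_space B"
    and "M \<in> DB B"
    and "is_hat_measure B M N"
    and "f \<in> B"
  shows "(\<integral>\<^sup>+ x. ennreal ((f x)\<^sup>2) \<partial>M)
         = (\<integral>\<^sup>+ \<phi>. ennreal ((cmod (gelfand (\<lambda>x. complex_of_real (f x)) \<phi>))\<^sup>2) \<partial>N)"
proof -
  interpret admissible B by (rule admissible.intro) fact
  define h where "h = (\<lambda>x. (f x)\<^sup>2)"
  have "h \<in> B" using mult_mem[OF \<open>f \<in> B\<close> \<open>f \<in> B\<close>] by (simp add: h_def power2_eq_square)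
  have [measurable]: "h \<in> borel_measurable M"
    using assms(2) \<open>h \<in> B\<close> unfolding DB_def by auto
  have [measurable]: "(\<lambda>\<phi>. \<phi> (of_real_fun h)) \<in> borel_measurable N"
    using assms(3) unfolding is_hat_measure_def by (blast intro: measurable_evaluation)
  have "(\<integral>\<^sup>+ x. ennreal ((f x)\<^sup>2) \<partial>M) = (SUP n. \<integral>\<^sup>+ x. ennreal (max (h x - 1 / Suc n) 0) \<partial>M)"
    unfolding h_def by (rule nn_integral_eq_SUP_pos_part) (simp add: h_def[symmetric])
  also have "\<dots> = (SUP n. \<integral>\<^sup>+ \<phi>. ennreal (max (Re (\<phi> (of_real_fun h)) - 1 / Suc n) 0) \<partial>N)"
    using nn_integral_hat_measure_pos_part[OF assms(2,3) \<open>h \<in> B\<close>] by (simp add: h_def)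
  also have "\<dots> = (\<integral>\<^sup>+ \<phi>. ennreal (Re (\<phi> (of_real_fun h))) \<partial>N)"
    by (rule nn_integral_eq_SUP_pos_part[symmetric]) measurable
  also have "\<dots> = (\<integral>\<^sup>+ \<phi>. ennreal ((cmod (gelfand (\<lambda>x. complex_of_real (f x)) \<phi>))\<^sup>2) \<partial>N)"
    using Re_square_eq_norm_gelfand_square[OF _ \<open>f \<in> B\<close>] space_hat_measure[OF assms(3)]
    unfolding h_def by (intro nn_integral_cong) simp
  finally show ?thesis .
qed

end
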